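(* Consider the $r$-cGA on $r\text{-OneMax}$ and let $p^{(t)}_{i,j}$, $(i,j)\in\{1,\dots,n\}\times\{0,\dots,r-1\}$, be the frequencies in the current iteration $t$. Let $x,y\in\{0,\dots,r-1\}^n$ be the two individuals sampled in this iteration, and for a position $i$ let $D_i:=\sum_{j\neq i}\mathbf{1}[x_j=r-1]-\sum_{j\neq i}\mathbf{1}[y_j=r-1]$. Then, for sufficiently large $n$, \[\Pr[D_i=0]\geq \frac{4}{9\left(2\sqrt{3\sum_{j\neq i}p^{(t)}_{j,r-1}(1-p^{(t)}_{j,r-1})}+1\right)}.\]
   Context: Let $n\geq 1$, $r\geq 2$ be integers and $K>0$. The $r$-cGA maximizing $f$ maintains frequencies $p^{(t)}_{i,j}$, initialized to $1/r$. In iteration $t$ it samples $x,y\in\{0,\dots,r-1\}^n$ independently, each position $i$ independently with $\Pr[x_i=j]=p^{(t)}_{i,j}$ (here $x,y$ denote these samples before any swapping); if $f(x)<f(y)$ it swaps them; then it sets $p^{(t+1)}_{i,j}=p^{(t)}_{i,j}+\frac1K(\mathbf{1}[x_i=j]-\mathbf{1}[y_i=j])$, with no margins. Here $f=r\text{-OneMax}$, $r\text{-OneMax}(x)=\sum_{i=1}^n\mathbf{1}[x_i=r-1]$. *)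

theory Defs
  imports "HOL-Probability.Probability"
begin

text \<open>Positions are indexed by 0..n-1 (paper: 1..n), values by 0..r-1.
  A frequency matrix p :: nat => nat => real gives p i j = Pr[x_i = j].\<close>

definition valid_freqs :: "nat \<Rightarrow> nat \<Rightarrow> (nat \<Rightarrow> nat \<Rightarrow> real) \<Rightarrow> bool" where
  "valid_freqs n r p \<longleftrightarrow>
     (\<forall>i<n. (\<forall>j<r. 0 \<le> p i j) \<and> (\<Sum>j<r. p i j) = 1)"

definition pos_pmf :: "nat \<Rightarrow> (nat \<Rightarrow> nat \<Rightarrow> real) \<Rightarrow> nat \<Rightarrow> nat pmf" where
  "pos_pmf r p i = embed_pmf (\<lambda>j. if j < r then p i j else 0)"

text \<open>Distribution of a sampled individual x in {0..r-1}^n (positions sampled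
  independently); x is a function nat => nat, equal to 0 outside {0..<n}.\<close>
definition indiv_pmf :: "nat \<Rightarrow> nat \<Rightarrow> (nat \<Rightarrow> nat \<Rightarrow> real) \<Rightarrow> (nat \<Rightarrow> nat) pmf" where
  "indiv_pmf n r p = Pi_pmf {..<n} 0 (pos_pmf r p)"

definition D :: "nat \<Rightarrow> nat \<Rightarrow> nat \<Rightarrow> (nat \<Rightarrow> nat) \<Rightarrow> (nat \<Rightarrow> nat) \<Rightarrow> int" where
  "D n r i x y = int (card {j \<in> {..<n} - {i}. x j = r - 1})
                - int (card {j \<in> {..<n} - {i}. y j = r - 1})"

end

theory Submission
  imports Defs
begin

text \<open>Let X and Y count the entries r - 1 of x and y at the positions other than i, so that
  D_i = 0 means X = Y, where X and Y are independent with a common law M. As positions are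
  sampled independently, M has mean mu = sum p_j and variance sigma^2 = sum p_j (1 - p_j), with
  p_j = p_{j,r-1}. By Chebyshev's inequality the set J of integers within distance
  a = sqrt (3 sigma^2) of mu has mass at least 2/3 under M, and J has fewer than 2a + 1
  elements, so by Cauchy-Schwarz Pr[X = Y] >= sum_{k in J} M(k)^2 >= (2/3)^2 / |J|.
  The bound holds for every n, so any N works.\<close>

lemma collision_prob_ge_square_div_card:
  fixes M :: "'a pmf"
  assumes "finite J"
  shows "measure_pmf.prob M J ^ 2 / card J \<le> measure_pmf.prob (pair_pmf M M) {(a, b). a = b}"
proof -
  have "measure_pmf.prob M J ^ 2 = (\<Sum>k\<in>J. pmf M k) ^ 2"
    using assms by (simp add: measure_measure_pmf_finite)
  also have "\<dots> \<le> (\<Sum>k\<in>J. pmf M k ^ 2) * card J"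
    by (rule sum_squared_le_sum_of_squares)
  finally have cauchy_schwarz: "measure_pmf.prob M J ^ 2 / card J \<le> (\<Sum>k\<in>J. pmf M k ^ 2)"
    by (cases "card J = 0") (simp_all add: divide_le_eq sum_nonneg)
  have "(\<Sum>k\<in>J. pmf M k ^ 2) = (\<Sum>k\<in>J. pmf (pair_pmf M M) (k, k))"
    by (simp add: pmf_pair power2_eq_square)
  also have "\<dots> = measure_pmf.prob (pair_pmf M M) ((\<lambda>k. (k, k)) ` J)"
    using assms by (simp add: measure_measure_pmf_finite sum.reindex inj_on_def)
  also have "\<dots> \<le> measure_pmf.prob (pair_pmf M M) {(a, b). a = b}"
    by (intro measure_pmf.finite_measure_mono) auto
  finally show ?thesis
    using cauchy_schwarz by linarith
qed

lemma finite_nat_dist_less: "finite {k::nat. \<bar>real k - c\<bar> < a}"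
proof (rule finite_subset)
  show "{k::nat. \<bar>real k - c\<bar> < a} \<subseteq> {..nat \<lceil>c + a\<rceil>}"
    by (auto simp: le_nat_iff intro!: le_ceiling_iff[THEN iffD2])
qed simp

lemma card_nat_dist_less:
  assumes "a \<ge> 0"
  shows "real (card {k::nat. \<bar>real k - c\<bar> < a}) < 2 * a + 1"
proof -
  define J where "J = {k::nat. \<bar>real k - c\<bar> < a}"
  have fin: "finite J"
    unfolding J_def by (rule finite_nat_dist_less)
  show ?thesis
  proof (cases "J = {}")
    case False
    have "card J \<le> card {Min J..Max J}"
      using fin by (intro card_mono) auto
    moreover have "Min J \<le> Suc (Max J)"
      using fin False by (simp add: le_SucI)
    ultimately have "real (card J) \<le> real (Max J) + 1 - real (Min J)"
      by (simp add: of_nat_diff)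
    moreover have "Max J \<in> J" "Min J \<in> J"
      using fin False by simp_all
    then have "real (Max J) - real (Min J) < 2 * a"
      unfolding J_def by auto
    ultimately show ?thesis
      unfolding J_def by linarith
  qed (use assms J_def in simp)
qed

lemma prob_dist_expectation_less_ge:
  fixes M :: "nat pmf"
  assumes "finite (set_pmf M)" "a > 0"
  shows "1 - measure_pmf.variance M real / a\<^sup>2
    \<le> measure_pmf.prob M {k. \<bar>real k - measure_pmf.expectation M real\<bar> < a}"
proof -
  let ?\<mu> = "measure_pmf.expectation M real"
  have "measure_pmf.prob M {k \<in> space M. \<bar>real k - ?\<mu>\<bar> \<ge> a} \<le> measure_pmf.variance M real / a\<^sup>2"
    using assms by (intro measure_pmf.Chebyshev_inequality integrable_measure_pmf_finite) auto
  moreover have "{k. \<bar>real k - ?\<mu>\<bar> < a} = space M - {k \<in> space M. \<bar>real k - ?\<mu>\<bar> \<ge> a}"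
    by auto
  then have "measure_pmf.prob M {k. \<bar>real k - ?\<mu>\<bar> < a}
      = 1 - measure_pmf.prob M {k \<in> space M. \<bar>real k - ?\<mu>\<bar> \<ge> a}"
    by (simp only:) (rule measure_pmf.prob_compl, simp)
  ultimately show ?thesis
    by linarith
qed

lemma collision_prob_ge_variance:
  fixes M :: "nat pmf"
  assumes "finite (set_pmf M)"
  shows "4 / (9 * (2 * sqrt (3 * measure_pmf.variance M real) + 1))
    \<le> measure_pmf.prob (pair_pmf M M) {(a, b). a = b}"
proof -
  define \<sigma>2 where "\<sigma>2 = measure_pmf.variance M real"
  define J where "J a = {k::nat. \<bar>real k - measure_pmf.expectation M real\<bar> < a}" for a
  have "\<sigma>2 \<ge> 0"
    unfolding \<sigma>2_def by (rule measure_pmf.variance_positive)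
  obtain a where "a > 0" "\<sigma>2 / a\<^sup>2 \<le> 1/3" "card (J a) \<le> 2 * sqrt (3 * \<sigma>2) + 1"
  proof (cases "\<sigma>2 = 0")
    case True
    have "real (card (J (1/2))) < 2"
      using card_nat_dist_less[of "1/2"] by (simp add: J_def)
    then show ?thesis
      using True that[of "1/2"] by simp
  next
    case False
    then have "sqrt (3 * \<sigma>2) > 0" "\<sigma>2 / (sqrt (3 * \<sigma>2))\<^sup>2 = 1/3"
      using \<open>\<sigma>2 \<ge> 0\<close> by simp_all
    then show ?thesis
      using card_nat_dist_less[of "sqrt (3 * \<sigma>2)"]
      by (intro that[of "sqrt (3 * \<sigma>2)"]) (simp_all add: J_def less_imp_le)
  qed
  have mass: "2/3 \<le> measure_pmf.prob M (J a)"
    using prob_dist_expectation_less_ge[OF assms \<open>a > 0\<close>] \<open>\<sigma>2 / a\<^sup>2 \<le> 1/3\<close>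
    by (simp add: J_def \<sigma>2_def)
  then have "J a \<noteq> {}"
    by auto
  then have "card (J a) > 0"
    by (simp add: card_gt_0_iff J_def finite_nat_dist_less)
  have "4 / (9 * (2 * sqrt (3 * \<sigma>2) + 1)) \<le> (2/3)\<^sup>2 / card (J a)"
    using \<open>card (J a) > 0\<close> \<open>card (J a) \<le> 2 * sqrt (3 * \<sigma>2) + 1\<close>
    by (simp add: frac_le power2_eq_square)
  also have "\<dots> \<le> measure_pmf.prob M (J a) ^ 2 / card (J a)"
    using mass by (intro divide_right_mono power_mono) auto
  also have "\<dots> \<le> measure_pmf.prob (pair_pmf M M) {(a, b). a = b}"
    by (rule collision_prob_ge_square_div_card) (simp add: J_def finite_nat_dist_less)
  finally show ?thesis
    unfolding \<sigma>2_def .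
qed

lemma (in prob_space) expectation_square_sum:
  fixes Z :: "'i \<Rightarrow> 'a \<Rightarrow> real"
  assumes "finite S" "\<And>j k. j \<in> S \<Longrightarrow> k \<in> S \<Longrightarrow> integrable M (\<lambda>x. Z j x * Z k x)"
  shows "expectation (\<lambda>x. (\<Sum>j\<in>S. Z j x)\<^sup>2) = (\<Sum>j\<in>S. \<Sum>k\<in>S. expectation (\<lambda>x. Z j x * Z k x))"
  using assms by (simp add: power2_eq_square sum_product Bochner_Integration.integral_sum)

lemma expectation_of_bool_eq_pmf:
  "measure_pmf.expectation M (\<lambda>v. of_bool (v = c)) = pmf M c"
proof -
  have "(\<lambda>v. of_bool (v = c) :: real) = indicator {c}"
    by (auto simp: fun_eq_iff)
  then show ?thesis
    by (simp add: measure_pmf_single)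
qed

lemma expectation_Pi_pmf_component:
  fixes f :: "'b \<Rightarrow> real"
  assumes "finite A" "j \<in> A"
  shows "measure_pmf.expectation (Pi_pmf A dflt p) (\<lambda>x. f (x j)) = measure_pmf.expectation (p j) f"
proof -
  have "map_pmf (\<lambda>x. x j) (Pi_pmf A dflt p) = p j"
    using assms by (simp add: Pi_pmf_component)
  then show ?thesis
    by (metis integral_map_pmf)
qed

lemma expectation_Pi_pmf_two_components:
  fixes f g :: "'b \<Rightarrow> real"
  assumes "finite A" "j \<in> A" "k \<in> A" "j \<noteq> k"
    and "integrable (measure_pmf (p j)) f" "integrable (measure_pmf (p k)) g"
    and "\<And>v. v \<in> set_pmf (p j) \<Longrightarrow> f v \<ge> 0" "\<And>v. v \<in> set_pmf (p k) \<Longrightarrow> g v \<ge> 0"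
  shows "measure_pmf.expectation (Pi_pmf A dflt p) (\<lambda>x. f (x j) * g (x k))
    = measure_pmf.expectation (p j) f * measure_pmf.expectation (p k) g"
proof -
  define h where "h l = (if l = j then f else if l = k then g else (\<lambda>_. 1))" for l
  have "(\<Prod>l\<in>A. h l (x l)) = (\<Prod>l\<in>{j, k}. h l (x l))" for x
    using assms(1-3) by (intro prod.mono_neutral_right) (auto simp: h_def)
  then have "measure_pmf.expectation (Pi_pmf A dflt p) (\<lambda>x. f (x j) * g (x k))
      = measure_pmf.expectation (Pi_pmf A dflt p) (\<lambda>x. \<Prod>l\<in>A. h l (x l))"
    using assms(4) by (simp add: h_def)
  also have "\<dots> = (\<Prod>l\<in>A. measure_pmf.expectation (p l) (h l))"
    using assms by (intro expectation_prod_Pi_pmf) (auto simp: h_def)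
  also have "\<dots> = (\<Prod>l\<in>{j, k}. measure_pmf.expectation (p l) (h l))"
    using assms(1-3) by (intro prod.mono_neutral_right) (auto simp: h_def)
  finally show ?thesis
    using assms(4) by (simp add: h_def)
qed

lemma pmf_pos_pmf:
  assumes "valid_freqs n r p" "i < n"
  shows "pmf (pos_pmf r p i) k = (if k < r then p i k else 0)"
proof -
  have nonneg: "\<forall>j<r. 0 \<le> p i j" and "(\<Sum>j<r. p i j) = 1"
    using assms by (auto simp: valid_freqs_def)
  have "(\<integral>\<^sup>+j. ennreal (if j < r then p i j else 0) \<partial>count_space UNIV)
      = (\<Sum>j<r. ennreal (p i j))"
    by (subst nn_integral_count_space'[of "{..<r}"]) auto
  also have "\<dots> = 1"
    using nonneg \<open>(\<Sum>j<r. p i j) = 1\<close> by (subst sum_ennreal) auto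
  finally show ?thesis
    unfolding pos_pmf_def using nonneg by (subst pmf_embed_pmf) auto
qed

lemma finite_set_pmf_pos_pmf:
  assumes "valid_freqs n r p" "i < n"
  shows "finite (set_pmf (pos_pmf r p i))"
proof (rule finite_subset)
  show "set_pmf (pos_pmf r p i) \<subseteq> {..<r}"
    using assms by (auto simp: set_pmf_eq pmf_pos_pmf split: if_splits)
qed simp

lemma finite_set_pmf_indiv_pmf:
  assumes "valid_freqs n r p"
  shows "finite (set_pmf (indiv_pmf n r p))"
  using assms unfolding indiv_pmf_def
  by (subst set_Pi_pmf) (auto intro!: finite_PiE_dflt finite_set_pmf_pos_pmf)

lemma expectation_indiv_pmf_indicator:
  assumes "valid_freqs n r p" "j < n" "c < r"
  shows "measure_pmf.expectation (indiv_pmf n r p) (\<lambda>x. of_bool (x j = c)) = p j c"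
  using assms expectation_Pi_pmf_component[where f = "\<lambda>v. of_bool (v = c)" and A = "{..<n}"]
  by (simp add: indiv_pmf_def expectation_of_bool_eq_pmf pmf_pos_pmf)

lemma expectation_indiv_pmf_centered_indicators:
  assumes "valid_freqs n r p" "j < n" "k < n" "c < r"
  shows "measure_pmf.expectation (indiv_pmf n r p)
      (\<lambda>x. (of_bool (x j = c) - p j c) * (of_bool (x k = c) - p k c))
    = (if j = k then p j c * (1 - p j c) else 0)"
proof -
  let ?E = "measure_pmf.expectation (indiv_pmf n r p)"
  define I where "I l x = (of_bool (x l = c) :: real)" for l :: nat and x :: "nat \<Rightarrow> nat"
  have int: "integrable (measure_pmf (indiv_pmf n r p)) f" for f :: "_ \<Rightarrow> real"
    using assms(1) by (intro integrable_measure_pmf_finite finite_set_pmf_indiv_pmf)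
  have E_I: "?E (I l) = p l c" if "l < n" for l
    using assms(1,4) that unfolding I_def by (simp add: expectation_indiv_pmf_indicator)
  have E_II: "?E (\<lambda>x. I j x * I k x) = (if j = k then p j c else p j c * p k c)"
  proof (cases "j = k")
    case False
    have "?E (\<lambda>x. I j x * I k x)
        = measure_pmf.expectation (pos_pmf r p j) (\<lambda>v. of_bool (v = c))
          * measure_pmf.expectation (pos_pmf r p k) (\<lambda>v. of_bool (v = c))"
      unfolding I_def indiv_pmf_def using assms False
      by (intro expectation_Pi_pmf_two_components integrable_measure_pmf_finite)
        (auto simp: finite_set_pmf_pos_pmf)
    then show ?thesis
      using assms False by (simp add: expectation_of_bool_eq_pmf pmf_pos_pmf)
  next
    case True
    then have "(\<lambda>x. I j x * I k x) = I j"
      by (simp add: I_def fun_eq_iff)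
    then show ?thesis
      using True E_I assms(2) by simp
  qed
  have "?E (\<lambda>x. (I j x - p j c) * (I k x - p k c))
      = ?E (\<lambda>x. I j x * I k x) - p k c * ?E (I j) - p j c * ?E (I k) + p j c * p k c"
    by (simp add: algebra_simps int)
  also have "\<dots> = (if j = k then p j c * (1 - p j c) else 0)"
    using E_I E_II assms(2,3) by (cases "j = k") (simp_all add: algebra_simps)
  finally show ?thesis
    unfolding I_def .
qed

definition onemax_on :: "nat set \<Rightarrow> nat \<Rightarrow> (nat \<Rightarrow> nat) \<Rightarrow> nat" where
  "onemax_on S r x = card {j \<in> S. x j = r - 1}"

lemma real_onemax_on:
  "finite S \<Longrightarrow> real (onemax_on S r x) = (\<Sum>j\<in>S. of_bool (x j = r - 1))"
  by (simp add: onemax_on_def Int_def)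

lemma expectation_onemax_on:
  assumes "valid_freqs n r p" "S \<subseteq> {..<n}" "r > 0"
  shows "measure_pmf.expectation (indiv_pmf n r p) (\<lambda>x. real (onemax_on S r x))
    = (\<Sum>j\<in>S. p j (r - 1))"
proof -
  have "finite S"
    using assms(2) finite_subset by blast
  then have "measure_pmf.expectation (indiv_pmf n r p) (\<lambda>x. real (onemax_on S r x))
      = measure_pmf.expectation (indiv_pmf n r p) (\<lambda>x. \<Sum>j\<in>S. of_bool (x j = r - 1))"
    by (simp only: real_onemax_on)
  also have "\<dots> = (\<Sum>j\<in>S. measure_pmf.expectation (indiv_pmf n r p) (\<lambda>x. of_bool (x j = r - 1)))"
    using assms(1)
    by (intro Bochner_Integration.integral_sum integrable_measure_pmf_finite finite_set_pmf_indiv_pmf)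
  also have "\<dots> = (\<Sum>j\<in>S. p j (r - 1))"
    using assms by (intro sum.cong refl expectation_indiv_pmf_indicator) auto
  finally show ?thesis .
qed

lemma variance_onemax_on:
  assumes "valid_freqs n r p" "S \<subseteq> {..<n}" "r > 0"
  shows "measure_pmf.variance (indiv_pmf n r p) (\<lambda>x. real (onemax_on S r x))
    = (\<Sum>j\<in>S. p j (r - 1) * (1 - p j (r - 1)))"
proof -
  let ?E = "measure_pmf.expectation (indiv_pmf n r p)"
  define Z where "Z j x = of_bool (x j = r - 1) - p j (r - 1)" for j :: nat and x :: "nat \<Rightarrow> nat"
  have "finite S"
    using assms(2) finite_subset by blast
  have "real (onemax_on S r x) - (\<Sum>j\<in>S. p j (r - 1)) = (\<Sum>j\<in>S. Z j x)" for x
    using \<open>finite S\<close> by (simp add: Z_def real_onemax_on sum_subtractf)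
  then have "measure_pmf.variance (indiv_pmf n r p) (\<lambda>x. real (onemax_on S r x))
      = ?E (\<lambda>x. (\<Sum>j\<in>S. Z j x)\<^sup>2)"
    using expectation_onemax_on[OF assms] by simp
  also have "\<dots> = (\<Sum>j\<in>S. \<Sum>k\<in>S. ?E (\<lambda>x. Z j x * Z k x))"
    using \<open>finite S\<close> assms(1)
    by (intro measure_pmf.expectation_square_sum integrable_measure_pmf_finite
      finite_set_pmf_indiv_pmf)
  also have "\<dots> = (\<Sum>j\<in>S. \<Sum>k\<in>S. if j = k then p j (r - 1) * (1 - p j (r - 1)) else 0)"
    using assms unfolding Z_def
    by (intro sum.cong refl expectation_indiv_pmf_centered_indicators) auto
  finally show ?thesis
    using \<open>finite S\<close> by simp
qed

lemma collision_prob_map_pmf: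
  "measure_pmf.prob (pair_pmf (map_pmf f A) (map_pmf f A)) {(a, b). a = b}
    = measure_pmf.prob (pair_pmf A A) {(x, y). f x = f y}"
  by (simp flip: map_pair add: case_prod_unfold)

lemma D_eq_0_iff: "D n r i x y = 0 \<longleftrightarrow> onemax_on ({..<n} - {i}) r x = onemax_on ({..<n} - {i}) r y"
  by (simp add: D_def onemax_on_def)

theorem lemma2:
  fixes r :: nat
  assumes "r \<ge> 2"
  shows "\<exists>N. \<forall>n \<ge> N. \<forall>p i. valid_freqs n r p \<longrightarrow> i < n \<longrightarrow>
     measure_pmf.prob (pair_pmf (indiv_pmf n r p) (indiv_pmf n r p))
        {(x, y). D n r i x y = 0}
     \<ge> 4 / (9 * (2 * sqrt (3 * (\<Sum>j\<in>{..<n} - {i}. p j (r - 1) * (1 - p j (r - 1)))) + 1))"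
proof (intro exI allI impI)
  fix n p i
  assume "valid_freqs n r p" "i < n"
  define M where "M = map_pmf (onemax_on ({..<n} - {i}) r) (indiv_pmf n r p)"
  have "finite (set_pmf M)"
    unfolding M_def using \<open>valid_freqs n r p\<close> by (simp add: finite_set_pmf_indiv_pmf)
  moreover have "measure_pmf.variance M real = (\<Sum>j\<in>{..<n} - {i}. p j (r - 1) * (1 - p j (r - 1)))"
    unfolding M_def using variance_onemax_on[OF \<open>valid_freqs n r p\<close>] assms by simp
  ultimately show "4 / (9 * (2 * sqrt (3 * (\<Sum>j\<in>{..<n} - {i}. p j (r - 1) * (1 - p j (r - 1)))) + 1))
      \<le> measure_pmf.prob (pair_pmf (indiv_pmf n r p) (indiv_pmf n r p)) {(x, y). D n r i x y = 0}"
    using collision_prob_ge_variance[of M] by (simp add: M_def collision_prob_map_pmf D_eq_0_iff)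
qed

end
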